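(* Let $b>1$, $p\ge1$, $R\subseteq\{0,\ldots,p-1\}$ and let $I\subseteq\mathbb{N}$ be finite and non-empty. Let $k$ be the greatest divisor of $p$ coprime with $b$ and $d=p/k$. A state $s$ of $\mathcal{C}_{R,p,I}$ belongs to a $0$-circuit if and only if either $s$ is the initial state, or $s=(xd,\bot)$ for some $x\in\{0,\ldots,k-1\}$.
   Context: $A_b=\{0,\ldots,b-1\}$. $\mathcal{A}_{R,p}$: states $\{0,\ldots,p-1\}$, initial $0$, final $R$, transitions $n\xrightarrow{a}(nb+a)\bmod p$. With $m=\max I$, $\mathcal{B}_I$: states $\{0,\ldots,m\}\cup\{\bot\}$, initial $0$, final $I$, transitions $i\xrightarrow{a}ib+a$ if $ib+a\le m$, else $i\xrightarrow{a}\bot$, and $\bot\xrightarrow{a}\bot$. $\mathcal{C}_{R,p,I}$ is the accessible part (states reachable from the initial state $(0,0)$) of the product of $\mathcal{A}_{R,p}$ and $\mathcal{B}_I$, with transitions $(s,t)\xrightarrow{a}(s',t')$ iff $s\xrightarrow{a}s'$ and $t\xrightarrow{a}t'$, and $(s,t)$ final iff exactly one of $s\in R$, $t\in I$ holds. A $0$-circuit is a circuit all of whose transitions are labelled $0$. *)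

theory Defs
  imports Main
begin

(* States of B_I: Some i for i in {0..m}, None for the sink state \<bottom>. *)

definition A_step :: "nat \<Rightarrow> nat \<Rightarrow> nat \<Rightarrow> nat \<Rightarrow> nat" where
  "A_step b p n a = (n * b + a) mod p"

definition B_step :: "nat \<Rightarrow> nat set \<Rightarrow> nat option \<Rightarrow> nat \<Rightarrow> nat option" where
  "B_step b I t a = (case t of None \<Rightarrow> None
      | Some i \<Rightarrow> (if i * b + a \<le> Max I then Some (i * b + a) else None))"

definition C_step :: "nat \<Rightarrow> nat \<Rightarrow> nat set \<Rightarrow> nat \<times> nat option \<Rightarrow> nat \<Rightarrow> nat \<times> nat option" where
  "C_step b p I st a = (A_step b p (fst st) a, B_step b I (snd st) a)"

definition C_init :: "nat \<times> nat option" where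
  "C_init = (0, Some 0)"

inductive_set C_states :: "nat \<Rightarrow> nat \<Rightarrow> nat set \<Rightarrow> (nat \<times> nat option) set"
  for b p I where
  init: "C_init \<in> C_states b p I"
| step: "st \<in> C_states b p I \<Longrightarrow> a < b \<Longrightarrow> C_step b p I st a \<in> C_states b p I"

definition C_final :: "nat set \<Rightarrow> nat set \<Rightarrow> nat \<times> nat option \<Rightarrow> bool" where
  "C_final R I st = ((fst st \<in> R) \<noteq> (case snd st of None \<Rightarrow> False | Some i \<Rightarrow> i \<in> I))"

definition on_zero_circuit :: "nat \<Rightarrow> nat \<Rightarrow> nat set \<Rightarrow> nat \<times> nat option \<Rightarrow> bool" where
  "on_zero_circuit b p I st =
     (st \<in> C_states b p I \<and> (\<exists>n\<ge>1. ((\<lambda>q. C_step b p I q 0) ^^ n) st = st))"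

end

theory Submission
  imports Defs "HOL-Number_Theory.Number_Theory"
begin

text \<open>Reading the digit 0 multiplies the first component by \<open>b\<close> modulo \<open>p\<close>
  and the second one by \<open>b\<close> until it overflows to \<open>\<bottom>\<close>. A state \<open>(a, Some i)\<close>
  with \<open>i > 0\<close> therefore never returns to itself, and the only reachable state with
  second component \<open>Some 0\<close> is the initial one, which carries a 0-loop. A state
  \<open>(a, \<bottom>)\<close> lies on a 0-circuit iff \<open>a\<close> is periodic under \<open>a \<mapsto> a b mod p\<close>.
  Writing \<open>p = k d\<close>, the factor \<open>d\<close> divides a power of \<open>b\<close> by maximality of \<open>k\<close>;
  so a periodic \<open>a\<close> is a multiple of \<open>d\<close>, and conversely every multiple
  \<open>x d\<close> returns after \<open>\<phi>(k)\<close> steps by Euler's theorem.\<close>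

lemma zero_steps_None:
  assumes "a < p"
  shows "((\<lambda>q. C_step b p I q 0) ^^ n) (a, None) = (a * b ^ n mod p, None)"
  using assms
  by (induction n) (simp_all add: C_step_def A_step_def B_step_def mod_mult_right_eq ac_simps)

lemma zero_steps_Some:
  "snd (((\<lambda>q. C_step b p I q 0) ^^ n) (a, Some i)) \<in> {None, Some (i * b ^ n)}"
  by (induction n) (auto simp: C_step_def A_step_def B_step_def ac_simps)

lemma C_states_invariant:
  assumes "st \<in> C_states b p I" and "p \<ge> 1"
  shows "fst st < p" and "snd st = Some 0 \<Longrightarrow> fst st = 0"
  using assms
  by (induction rule: C_states.induct)
     (auto simp: C_init_def C_step_def A_step_def B_step_def split: option.splits if_splits)

lemma on_zero_circuit_Some_iff:
  assumes "b > 1" and "p \<ge> 1" and "(a, Some i) \<in> C_states b p I"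
  shows "on_zero_circuit b p I (a, Some i) \<longleftrightarrow> (a, Some i) = C_init"
proof
  assume "on_zero_circuit b p I (a, Some i)"
  then obtain n where "n \<ge> 1"
    and returns: "((\<lambda>q. C_step b p I q 0) ^^ n) (a, Some i) = (a, Some i)"
    unfolding on_zero_circuit_def by blast
  have "Some i \<in> {None, Some (i * b ^ n)}"
    using zero_steps_Some[where b=b and p=p and I=I and n=n and a=a and i=i] returns by simp
  moreover have "b ^ n > 1"
    using \<open>b > 1\<close> \<open>n \<ge> 1\<close> by (metis one_less_power less_le_trans zero_less_one)
  ultimately have "i = 0" by simp
  then show "(a, Some i) = C_init"
    using C_states_invariant[OF assms(3,2)] by (simp add: C_init_def)
next
  assume "(a, Some i) = C_init"
  then show "on_zero_circuit b p I (a, Some i)"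
    using assms(3) unfolding on_zero_circuit_def
    by (auto intro!: exI[of _ 1] simp: C_init_def C_step_def A_step_def B_step_def)
qed

lemma on_zero_circuit_None_iff:
  assumes "(a, None) \<in> C_states b p I" and "p \<ge> 1"
  shows "on_zero_circuit b p I (a, None) \<longleftrightarrow> (\<exists>n\<ge>1. a * b ^ n mod p = a)"
  using assms zero_steps_None[OF C_states_invariant(1)[OF assms], where b=b and I=I]
  by (simp add: on_zero_circuit_def)

lemma split_off_coprime_factor:
  fixes b d :: nat
  assumes "d > 0"
  shows "\<exists>d1 d2 N. d = d1 * d2 \<and> d2 dvd b ^ N \<and> coprime d1 b"
  using assms
proof (induction d rule: less_induct)
  case (less d)
  show ?case
  proof (cases "coprime d b")
    case True
    then show ?thesis by (intro exI[of _ d] exI[of _ 1] exI[of _ 0]) simp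
  next
    case False
    define g where "g = gcd d b"
    have "g > 1"
      using False less.prems unfolding g_def
      by (metis coprime_iff_gcd_eq_1 gcd_pos_nat less_one nat_neq_iff)
    obtain d' where d': "d = g * d'"
      unfolding g_def by (meson gcd_dvd1 dvdE)
    with \<open>g > 1\<close> less.prems have "0 < d'" "d' < d" by auto
    then obtain d1 d2 N where IH: "d' = d1 * d2" "d2 dvd b ^ N" "coprime d1 b"
      using less.IH by blast
    have "g * d2 dvd b ^ Suc N"
      using IH(2) unfolding g_def by (simp add: mult_dvd_mono)
    then show ?thesis
      using d' IH by (intro exI[of _ d1] exI[of _ "g * d2"] exI[of _ "Suc N"]) (simp add: ac_simps)
  qed
qed

lemma greatest_coprime_divisor:
  fixes b p :: nat
  assumes "p \<ge> 1" and "k = (GREATEST k. k dvd p \<and> coprime k b)"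
  shows "k dvd p" and "coprime k b" and "\<exists>N. p div k dvd b ^ N"
proof -
  have bound: "\<forall>y. y dvd p \<and> coprime y b \<longrightarrow> y \<le> p"
    using assms(1) by (auto intro: dvd_imp_le)
  have k: "k dvd p \<and> coprime k b"
    unfolding assms(2) by (rule GreatestI_nat[of _ 1]) (use bound in auto)
  then show "k dvd p" and "coprime k b" by simp_all
  have max: "y \<le> k" if "y dvd p" "coprime y b" for y
    unfolding assms(2) by (rule Greatest_le_nat) (use that bound in auto)
  have "p div k > 0"
    using k assms(1) by (auto elim: dvdE)
  then obtain d1 d2 N where split: "p div k = d1 * d2" "d2 dvd b ^ N" "coprime d1 b"
    using split_off_coprime_factor by blast
  have "k * d1 dvd p"
    using k split(1) by (metis dvd_mult_div_cancel dvd_triv_left mult.assoc)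
  then have "k * d1 \<le> k"
    using k split(3) max by simp
  moreover have "k > 0" "d1 > 0"
    using k assms(1) \<open>p div k > 0\<close> split(1) by (auto intro: Nat.gr0I)
  ultimately have "d1 = 1" by simp
  then show "\<exists>N. p div k dvd b ^ N"
    using split by auto
qed

lemma mod_fixed_point_power:
  fixes a c p :: nat
  assumes "a * c mod p = a"
  shows "a * c ^ j mod p = a"
proof (induction j)
  case 0
  then show ?case using assms by (metis mod_mod_trivial power_0 mult.right_neutral)
next
  case (Suc j)
  have "a * c ^ Suc j mod p = (a * c ^ j mod p) * c mod p"
    by (metis mod_mult_left_eq mult.assoc power_Suc2)
  then show ?case using Suc assms by simp
qed

lemma periodic_residue_dvd:
  fixes a b p d :: nat
  assumes "a * b ^ n mod p = a" and "n \<ge> 1" and "d dvd p" and "d dvd b ^ N"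
  shows "d dvd a"
proof -
  have "a * b ^ (n * N) mod p = a"
    using mod_fixed_point_power[OF assms(1), of N] by (simp add: power_mult)
  then have "a mod d = a * b ^ (n * N) mod d"
    using assms(3) by (metis mod_mod_cancel)
  moreover have "d dvd a * b ^ (n * N)"
    using assms(2,4) by (metis dvd_mult dvd_trans le_imp_power_dvd mult_le_mono1 mult_1)
  ultimately show ?thesis by (simp add: mod_eq_0_iff_dvd)
qed

lemma multiple_of_cofactor_periodic:
  fixes b k d x :: nat
  assumes "coprime k b" and "x < k"
  shows "x * d * b ^ totient k mod (k * d) = x * d"
proof -
  have "b ^ totient k mod k = 1 mod k"
    using euler_theorem[of b k] assms(1) by (simp add: cong_def coprime_commute)
  then have "x * b ^ totient k mod k = x"
    using assms(2) by (metis mod_mult_right_eq mod_less mult.right_neutral)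
  then show ?thesis
    by (metis mod_mult_mult2 mult.assoc mult.commute)
qed

theorem lemma38:
  fixes b p k d :: nat and R I :: "nat set" and s :: "nat \<times> nat option"
  assumes "b > 1" and "p \<ge> 1" and "R \<subseteq> {0..<p}"
    and "finite I" and "I \<noteq> {}"
    and "k = (GREATEST k. k dvd p \<and> coprime k b)"
    and "d = p div k"
    and "s \<in> C_states b p I"
  shows "on_zero_circuit b p I s \<longleftrightarrow>
           (s = C_init \<or> (\<exists>x<k. s = (x * d, None)))"
proof (cases s)
  case (Pair a t)
  note k = greatest_coprime_divisor[OF assms(2,6)]
  have p: "p = k * d" and "k > 0"
    using k(1) assms(2,7) by auto
  show ?thesis
  proof (cases t)
    case (Some i)
    then show ?thesis
      using on_zero_circuit_Some_iff[OF assms(1,2)] assms(8) Pair by auto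
  next
    case None
    have "a < p"
      using C_states_invariant(1)[OF assms(8,2)] Pair by simp
    have "(\<exists>n\<ge>1. a * b ^ n mod p = a) \<longleftrightarrow> (\<exists>x<k. a = x * d)"
    proof
      assume "\<exists>n\<ge>1. a * b ^ n mod p = a"
      then have "d dvd a"
        using k(3) periodic_residue_dvd p assms(7) by (metis dvd_triv_right)
      then show "\<exists>x<k. a = x * d"
        using \<open>a < p\<close> p by (auto elim!: dvdE simp: mult.commute)
    next
      assume "\<exists>x<k. a = x * d"
      then show "\<exists>n\<ge>1. a * b ^ n mod p = a"
        using multiple_of_cofactor_periodic[OF k(2)] \<open>k > 0\<close> p
        by (auto intro!: exI[of _ "totient k"] simp: Suc_le_eq)
    qed
    then show ?thesis
      using on_zero_circuit_None_iff assms(2,8) Pair None by (auto simp: C_init_def)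
  qed
qed

end
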